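(* Let $\rho\in(0,1)$ and $\sigma_x<\sigma_y$. Among all $\mathbf a=(x_1,y_1)$ on the circle $x_1^2+y_1^2=2x_2^{*2}$, the only one with $K(\mathbf a,\mathbf b^* )\le 0$ is $\mathbf a=\mathbf a^*=(-x_2^*,-x_2^* )$.
   Context: Standing setup. Fix $\sigma_x,\sigma_y>0$ and $\rho\in(-1,1)$, and let $(\xi,\eta)$ be a bivariate normal random vector with mean $(0,0)$ and covariance matrix $\Sigma=\begin{pmatrix}\sigma_x^2&\rho\sigma_x\sigma_y\\ \rho\sigma_x\sigma_y&\sigma_y^2\end{pmatrix}$. Player I (the minimizer) chooses $\mathbf a=(x_1,y_1)\in\mathbb R^2$ and Player II (the maximizer) chooses $\mathbf b=(x_2,y_2)\in\mathbb R^2$. Let $C_1(\mathbf a,\mathbf b)=\{(x,y):(x_1-x)^2+(y_1-y)^2<(x_2-x)^2+(y_2-y)^2\}$ and $C_2(\mathbf a,\mathbf b)=\{(x,y):(x_1-x)^2+(y_1-y)^2>(x_2-x)^2+(y_2-y)^2\}$. The payoff to Player II (paid by Player I) is $K(\mathbf a,\mathbf b)=x_1+y_1$ if $\mathbf a=\mathbf b$, and $K(\mathbf a,\mathbf b)=(x_1+y_1)\,P((\xi,\eta)\in C_1(\mathbf a,\mathbf b))+(x_2+y_2)\,P((\xi,\eta)\in C_2(\mathbf a,\mathbf b))$ if $\mathbf a\neq\mathbf b$. For $\mathbf a=(x,y)$ write $-\mathbf a=(-x,-y)$. Let $x_2^*=\frac{\sqrt{2\pi(\sigma_x^2+2\rho\sigma_x\sigma_y+\sigma_y^2)}}{4}$,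 $\mathbf b^*=(x_2^*,x_2^* )$ and $\mathbf a^*=(-x_2^*,-x_2^* )$. *)

theory Defs
  imports "HOL-Probability.Probability"
begin

text \<open>Density of the centred bivariate normal law with standard deviations sx, sy and
  correlation r (covariance matrix [[sx^2, r sx sy],[r sx sy, sy^2]]).\<close>
definition binormal_density :: "real \<Rightarrow> real \<Rightarrow> real \<Rightarrow> real \<times> real \<Rightarrow> real" where
  "binormal_density sx sy r p =
     (let x = fst p; y = snd p in
      exp (- (x\<^sup>2 / sx\<^sup>2 - 2 * r * x * y / (sx * sy) + y\<^sup>2 / sy\<^sup>2) / (2 * (1 - r\<^sup>2)))
      / (2 * pi * sx * sy * sqrt (1 - r\<^sup>2)))"

definition binormal :: "real \<Rightarrow> real \<Rightarrow> real \<Rightarrow> (real \<times> real) measure" where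
  "binormal sx sy r = density lborel (\<lambda>p. ennreal (binormal_density sx sy r p))"

definition C1 :: "real \<times> real \<Rightarrow> real \<times> real \<Rightarrow> (real \<times> real) set" where
  "C1 a b = {p. (fst a - fst p)\<^sup>2 + (snd a - snd p)\<^sup>2 < (fst b - fst p)\<^sup>2 + (snd b - snd p)\<^sup>2}"

definition C2 :: "real \<times> real \<Rightarrow> real \<times> real \<Rightarrow> (real \<times> real) set" where
  "C2 a b = {p. (fst a - fst p)\<^sup>2 + (snd a - snd p)\<^sup>2 > (fst b - fst p)\<^sup>2 + (snd b - snd p)\<^sup>2}"

text \<open>Payoff to Player II.\<close>
definition K :: "real \<Rightarrow> real \<Rightarrow> real \<Rightarrow> real \<times> real \<Rightarrow> real \<times> real \<Rightarrow> real" where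
  "K sx sy r a b =
     (if a = b then fst a + snd a
      else (fst a + snd a) * measure (binormal sx sy r) (C1 a b)
         + (fst b + snd b) * measure (binormal sx sy r) (C2 a b))"

definition x2star :: "real \<Rightarrow> real \<Rightarrow> real \<Rightarrow> real" where
  "x2star sx sy r = sqrt (2 * pi * (sx\<^sup>2 + 2 * r * sx * sy + sy\<^sup>2)) / 4"

end

theory Submission
  imports Defs
begin

text \<open>
  When \<open>a\<close> and \<open>b\<close> have the same norm, the two Voronoi cells \<open>C1 a b\<close> and \<open>C2 a b\<close> are
  the open half-planes bounded by the line through the origin orthogonal to \<open>b - a\<close>, and each
  is the reflection of the other through the origin. The centred normal law is invariant under
  that reflection and charges every nonempty open set, so both cells carry the same positive
  mass \<open>m\<close> and \<open>K a b = m (a\<^sub>1 + a\<^sub>2 + b\<^sub>1 + b\<^sub>2)\<close>. For \<open>b = b*\<close> this is nonpositive iff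
  \<open>a\<^sub>1 + a\<^sub>2 \<le> -2 x\<^sub>2*\<close>, and by Cauchy-Schwarz the only point of the circle of radius
  \<open>\<surd>2 x\<^sub>2*\<close> satisfying this is \<open>a* = (-x\<^sub>2*, -x\<^sub>2*)\<close>.
\<close>

lemma correlated_quadratic_form_ge:
  fixes u v r :: real
  assumes "\<bar>r\<bar> \<le> 1"
  shows "(1 - \<bar>r\<bar>) * (u\<^sup>2 + v\<^sup>2) \<le> u\<^sup>2 - 2 * r * u * v + v\<^sup>2"
proof -
  have "2 * r * u * v \<le> \<bar>r\<bar> * (2 * \<bar>u\<bar> * \<bar>v\<bar>)"
    using abs_ge_self[of "2 * r * u * v"] by (simp add: abs_mult mult_ac)
  also have "\<dots> \<le> \<bar>r\<bar> * (u\<^sup>2 + v\<^sup>2)"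
    using sum_squares_bound[of "\<bar>u\<bar>" "\<bar>v\<bar>"] by (intro mult_left_mono) simp_all
  finally show ?thesis by (simp add: algebra_simps)
qed

lemma binormal_density_pos:
  assumes "sx > 0" "sy > 0" "\<bar>r\<bar> < 1"
  shows "binormal_density sx sy r p > 0"
  using assms by (simp add: binormal_density_def Let_def abs_square_less_1)

lemma borel_measurable_binormal_density [measurable]:
  "binormal_density sx sy r \<in> borel_measurable borel"
  unfolding binormal_density_def Let_def borel_prod[symmetric] by measurable

lemma binormal_density_uminus: "binormal_density sx sy r (- p) = binormal_density sx sy r p"
  by (simp add: binormal_density_def Let_def)

lemma binormal_density_le_normal_product:
  assumes sx: "sx > 0" and sy: "sy > 0" and r: "\<bar>r\<bar> < 1"
  defines "s \<equiv> sqrt (1 + \<bar>r\<bar>)"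
  shows "binormal_density sx sy r (x, y)
         \<le> (1 + \<bar>r\<bar>) / sqrt (1 - r\<^sup>2) * normal_density 0 (sx * s) x * normal_density 0 (sy * s) y"
proof -
  define u v where "u = x / sx" and "v = y / sy"
  have r2: "0 < 1 - r\<^sup>2" using r by (simp add: abs_square_less_1)
  have s2: "s\<^sup>2 = 1 + \<bar>r\<bar>" using r by (simp add: s_def)
  have "x\<^sup>2 / sx\<^sup>2 = u\<^sup>2" "y\<^sup>2 / sy\<^sup>2 = v\<^sup>2" "2 * r * x * y / (sx * sy) = 2 * r * u * v"
    by (simp_all add: u_def v_def power_divide)
  then have "- (x\<^sup>2 / sx\<^sup>2 - 2 * r * x * y / (sx * sy) + y\<^sup>2 / sy\<^sup>2) / (2 * (1 - r\<^sup>2))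
      = - (u\<^sup>2 - 2 * r * u * v + v\<^sup>2) / (2 * (1 - r\<^sup>2))"
    by (simp only:)
  also have "\<dots> \<le> - ((1 - \<bar>r\<bar>) * (u\<^sup>2 + v\<^sup>2)) / (2 * (1 - r\<^sup>2))"
    using correlated_quadratic_form_ge[of r u v] r r2 by (intro divide_right_mono) auto
  also have "\<dots> = - (u\<^sup>2 + v\<^sup>2) / (2 * (1 + \<bar>r\<bar>))"
  proof -
    have "2 * (1 - r\<^sup>2) = (1 - \<bar>r\<bar>) * (2 * (1 + \<bar>r\<bar>))"
      by (simp add: algebra_simps power2_eq_square)
    then show ?thesis
      unfolding minus_mult_right using r by simp
  qed
  also have "\<dots> = - x\<^sup>2 / (2 * (sx * s)\<^sup>2) + - y\<^sup>2 / (2 * (sy * s)\<^sup>2)"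
  proof -
    have scale: "- ((x / sx)\<^sup>2 + (y / sy)\<^sup>2) / (2 * t) = - x\<^sup>2 / (2 * (sx\<^sup>2 * t)) + - y\<^sup>2 / (2 * (sy\<^sup>2 * t))"
      if "t > 0" for t
      using sx sy that by (simp add: field_simps power_divide)
    show ?thesis unfolding power_mult_distrib s2 u_def v_def by (rule scale) simp
  qed
  finally have "binormal_density sx sy r (x, y)
      \<le> exp (- x\<^sup>2 / (2 * (sx * s)\<^sup>2) + - y\<^sup>2 / (2 * (sy * s)\<^sup>2)) / (2 * pi * sx * sy * sqrt (1 - r\<^sup>2))"
    using sx sy r2 by (simp add: binormal_density_def divide_right_mono)
  also have "\<dots> = (1 + \<bar>r\<bar>) / sqrt (1 - r\<^sup>2) * normal_density 0 (sx * s) x * normal_density 0 (sy * s) y"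
  proof -
    define A B where "A = exp (- x\<^sup>2 / (2 * (sx * s)\<^sup>2))" and "B = exp (- y\<^sup>2 / (2 * (sy * s)\<^sup>2))"
    have "2 * pi * (sx * s)\<^sup>2 * (2 * pi * (sy * s)\<^sup>2) = (2 * pi * sx * sy * (1 + \<bar>r\<bar>))\<^sup>2"
      unfolding s2[symmetric] by (simp add: power2_eq_square algebra_simps)
    moreover have "0 < 2 * pi * sx * sy * (1 + \<bar>r\<bar>)" using sx sy by (simp add: add_pos_nonneg)
    ultimately have "sqrt (2 * pi * (sx * s)\<^sup>2) * sqrt (2 * pi * (sy * s)\<^sup>2) = 2 * pi * sx * sy * (1 + \<bar>r\<bar>)"
      by (simp only: real_sqrt_mult[symmetric] real_sqrt_abs abs_of_pos)
    then have densities: "normal_density 0 (sx * s) x * normal_density 0 (sy * s) y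
        = A * B / (2 * pi * sx * sy * (1 + \<bar>r\<bar>))"
      by (simp add: normal_density_def A_def B_def)
    have cancel: "X / (D * q) = t / q * (X / (D * t))" if "t \<noteq> 0" for t q X D :: real
      using that by (simp add: field_simps)
    show ?thesis
      unfolding exp_add A_def[symmetric] B_def[symmetric] mult.assoc[of "(1 + \<bar>r\<bar>) / sqrt (1 - r\<^sup>2)"] densities
      by (rule cancel) simp
  qed
  finally show ?thesis .
qed

lemma nn_integral_normal_density: "0 < s \<Longrightarrow> (\<integral>\<^sup>+x. normal_density m s x \<partial>lborel) = 1"
  by (subst nn_integral_eq_integral) (auto intro: integrable_normal_density)

lemma finite_measure_binormal:
  assumes sx: "sx > 0" and sy: "sy > 0" and r: "\<bar>r\<bar> < 1"
  shows "finite_measure (binormal sx sy r)"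
proof
  define s where "s = sqrt (1 + \<bar>r\<bar>)"
  define c where "c = (1 + \<bar>r\<bar>) / sqrt (1 - r\<^sup>2)"
  have s: "sx * s > 0" "sy * s > 0" using sx sy r by (auto simp: s_def)
  have "emeasure (binormal sx sy r) (space (binormal sx sy r))
      = (\<integral>\<^sup>+p. binormal_density sx sy r p \<partial>lborel)"
    by (simp add: binormal_def emeasure_density)
  also have "\<dots> \<le> (\<integral>\<^sup>+p. c * normal_density 0 (sx * s) (fst p) * normal_density 0 (sy * s) (snd p) \<partial>lborel)"
  proof (intro nn_integral_mono ennreal_leI)
    fix p :: "real \<times> real"
    show "binormal_density sx sy r p \<le> c * normal_density 0 (sx * s) (fst p) * normal_density 0 (sy * s) (snd p)"
      using binormal_density_le_normal_product[OF sx sy r, of "fst p" "snd p"] by (simp add: c_def s_def)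
  qed
  also have "\<dots> = (\<integral>\<^sup>+x. \<integral>\<^sup>+y. c * normal_density 0 (sx * s) x * normal_density 0 (sy * s) y \<partial>lborel \<partial>lborel)"
    by (simp add: lborel_prod[symmetric] lborel.nn_integral_fst[symmetric])
  also have "\<dots> = c"
    by (simp add: ennreal_mult'' nn_integral_cmult nn_integral_normal_density s)
  finally show "emeasure (binormal sx sy r) (space (binormal sx sy r)) \<noteq> \<infinity>"
    unfolding infinity_ennreal_def by (rule neq_top_trans[OF ennreal_neq_top])
qed

lemma lborel_distr_uminus_euclidean: "distr lborel borel uminus = (lborel :: 'a::euclidean_space measure)"
  by (subst lborel_affine[of "-1" 0]) (auto simp: density_1 one_ennreal_def[symmetric])

lemma emeasure_binormal_uminus:
  assumes [measurable]: "S \<in> sets borel"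
  shows "emeasure (binormal sx sy r) (uminus -` S) = emeasure (binormal sx sy r) S"
proof -
  have "emeasure (binormal sx sy r) S = (\<integral>\<^sup>+p. ennreal (binormal_density sx sy r p) * indicator S p \<partial>distr lborel borel uminus)"
    by (simp add: binormal_def emeasure_density lborel_distr_uminus_euclidean)
  also have "\<dots> = (\<integral>\<^sup>+p. ennreal (binormal_density sx sy r p) * indicator (uminus -` S) p \<partial>lborel)"
    by (subst nn_integral_distr) (auto simp: binormal_density_uminus indicator_def)
  also have "\<dots> = emeasure (binormal sx sy r) (uminus -` S)"
    using measurable_sets[of uminus borel borel S] by (simp add: binormal_def emeasure_density)
  finally show ?thesis ..
qed

lemma emeasure_lborel_open_pos:
  fixes S :: "'a::euclidean_space set"
  assumes "open S" "S \<noteq> {}"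
  shows "0 < emeasure lborel S"
proof (rule ccontr)
  assume "\<not> 0 < emeasure lborel S"
  with assms(1) have "S \<in> null_sets lborel" by (simp add: null_sets_def)
  then have "negligible S"
    unfolding negligible_iff_null_sets by (rule null_sets_completionI)
  with open_not_negligible[OF assms] show False by contradiction
qed

lemma measure_binormal_open_pos:
  assumes "sx > 0" "sy > 0" "\<bar>r\<bar> < 1" and S: "open S" "S \<noteq> {}"
  shows "0 < measure (binormal sx sy r) S"
proof -
  interpret finite_measure "binormal sx sy r"
    using finite_measure_binormal[OF assms(1-3)] .
  have [measurable]: "S \<in> sets borel" using S(1) by (rule borel_open)
  have "S \<notin> null_sets (binormal sx sy r)"
  proof
    assume "S \<in> null_sets (binormal sx sy r)"
    then have "AE p in lborel. p \<in> S \<longrightarrow> ennreal (binormal_density sx sy r p) = 0"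
      by (simp add: binormal_def null_sets_density_iff)
    then have "AE p in lborel. p \<notin> S"
      by eventually_elim (metis binormal_density_pos[OF assms(1-3)] ennreal_eq_0_iff not_le)
    then have "S \<in> null_sets lborel" by (simp add: AE_iff_null_sets)
    with emeasure_lborel_open_pos[OF S] show False by (simp add: null_setsD1)
  qed
  then have "emeasure (binormal sx sy r) S \<noteq> 0"
    by (simp add: null_sets_def binormal_def)
  then show ?thesis by (simp add: emeasure_eq_measure zero_less_measure_iff)
qed

lemma C1_eq_halfplane:
  assumes "(fst a)\<^sup>2 + (snd a)\<^sup>2 = (fst b)\<^sup>2 + (snd b)\<^sup>2"
  shows "C1 a b = {p. (fst b - fst a) * fst p + (snd b - snd a) * snd p < 0}"
  using assms unfolding C1_def by (auto simp: power2_eq_square algebra_simps)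

lemma C2_eq_uminus_C1:
  assumes "(fst a)\<^sup>2 + (snd a)\<^sup>2 = (fst b)\<^sup>2 + (snd b)\<^sup>2"
  shows "C2 a b = uminus -` C1 a b"
  using assms unfolding C1_eq_halfplane[OF assms] C2_def by (auto simp: power2_eq_square algebra_simps)

lemma K_le_0_iff_equal_norms:
  assumes "sx > 0" "sy > 0" "\<bar>r\<bar> < 1"
    and norms: "(fst a)\<^sup>2 + (snd a)\<^sup>2 = (fst b)\<^sup>2 + (snd b)\<^sup>2"
  shows "K sx sy r a b \<le> 0 \<longleftrightarrow> fst a + snd a + fst b + snd b \<le> 0"
proof (cases "a = b")
  case False
  define m where "m = measure (binormal sx sy r) (C1 a b)"
  have "0 < (fst a - fst b)\<^sup>2 + (snd a - snd b)\<^sup>2"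
    using False by (auto simp: prod_eq_iff sum_power2_gt_zero_iff)
  then have "a - b \<in> C1 a b"
    unfolding C1_eq_halfplane[OF norms] by (simp add: power2_eq_square algebra_simps)
  have "open (C1 a b)"
    unfolding C1_eq_halfplane[OF norms] by (intro open_Collect_less continuous_intros)
  then have "0 < m"
    using \<open>a - b \<in> C1 a b\<close> measure_binormal_open_pos[OF assms(1-3)] by (auto simp: m_def)
  have "measure (binormal sx sy r) (C2 a b) = m"
    using \<open>open (C1 a b)\<close>
    by (simp add: m_def measure_def C2_eq_uminus_C1[OF norms] emeasure_binormal_uminus)
  then have "K sx sy r a b = m * (fst a + snd a + fst b + snd b)"
    using False by (simp add: K_def m_def algebra_simps)
  with \<open>0 < m\<close> show ?thesis by (simp add: mult_le_0_iff)
qed (auto simp: K_def)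

lemma sum_le_iff_on_circle:
  fixes x y c :: real
  assumes "c > 0" and circle: "x\<^sup>2 + y\<^sup>2 = 2 * c\<^sup>2"
  shows "x + y + 2 * c \<le> 0 \<longleftrightarrow> x = - c \<and> y = - c"
proof
  assume sum: "x + y + 2 * c \<le> 0"
  have "(x - y)\<^sup>2 = 4 * c\<^sup>2 - (x + y)\<^sup>2"
    using circle by (simp add: power2_eq_square algebra_simps)
  also have "\<dots> \<le> 0"
  proof -
    have "(2 * c)\<^sup>2 \<le> (- (x + y))\<^sup>2" using sum \<open>c > 0\<close> by (intro power_mono) auto
    then show ?thesis by (simp only: power2_minus power_mult_distrib) simp
  qed
  finally have "x = y" by simp
  then show "x = - c \<and> y = - c"
    using circle sum \<open>c > 0\<close> by (simp add: power2_eq_iff)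
qed simp

lemma x2star_pos:
  assumes "sx > 0" "sy > 0" "\<bar>r\<bar> < 1"
  shows "0 < x2star sx sy r"
proof -
  have "0 \<le> (sx - sy)\<^sup>2" by simp
  also have "\<dots> < sx\<^sup>2 + 2 * r * sx * sy + sy\<^sup>2"
  proof -
    have "0 < 2 * sx * sy * (1 + r)" using assms by simp
    then show ?thesis by (simp add: power2_eq_square algebra_simps)
  qed
  finally show ?thesis by (simp add: x2star_def)
qed

theorem mainTheorem11:
  fixes sx sy r x1 y1 :: real
  assumes "sx > 0" and "sy > 0" and "0 < r" and "r < 1" and "sx < sy"
    and "x1\<^sup>2 + y1\<^sup>2 = 2 * (x2star sx sy r)\<^sup>2"
  shows "K sx sy r (x1, y1) (x2star sx sy r, x2star sx sy r) \<le> 0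
         \<longleftrightarrow> (x1, y1) = (- x2star sx sy r, - x2star sx sy r)"
proof -
  define c where "c = x2star sx sy r"
  have r: "\<bar>r\<bar> < 1" using assms(3,4) by simp
  have "K sx sy r (x1, y1) (c, c) \<le> 0 \<longleftrightarrow> x1 + y1 + 2 * c \<le> 0"
    using K_le_0_iff_equal_norms[OF assms(1,2) r, of "(x1, y1)" "(c, c)"] assms(6)
    by (simp add: c_def power2_eq_square algebra_simps)
  also have "\<dots> \<longleftrightarrow> x1 = - c \<and> y1 = - c"
    using sum_le_iff_on_circle x2star_pos[OF assms(1,2) r] assms(6) by (simp add: c_def)
  finally show ?thesis by (simp add: c_def)
qed

end
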